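(* In the stochastic linear bandit setting with SGD updates described below, assume $0<\eta\le\lambda/L^2$. Then for all $t\in\mathbb{N}$, almost surely, $$X_t\le X_{t-1}+N_t,\qquad N_t=2\eta\epsilon_t(\theta_{t-1}-\theta_* )^\top x_t-2\eta^3\epsilon_t(\theta_{t-1}-\theta_* )^\top x_t\,\|x_t\|_{V_{t-1}^{-1}}^4+2\epsilon_t^2\eta^2\|x_t\|_{V_{t-1}^{-1}}^2,$$ where $X_t=\|\theta_t-\theta_*\|_{V_t}^2$. In particular $X_t\le X_0+\sum_{i=1}^tN_i$.
   Context: Setting: unknown $\theta_*\in\mathbb{R}^d$ with $\|\theta_*\|_2\le L_*$. At each round $t\ge1$ a decision set $D_t\subseteq\{x\in\mathbb{R}^d:\|x\|_2\le L\}$ is given, the agent chooses $x_t\in D_t$ based on the past, and observes $y_t=\theta_*^\top x_t+\epsilon_t$, where $|\epsilon_t|\le1$ almost surely and $\mathbb{E}[\epsilon_t\mid x_{1:t},\epsilon_{1:t-1}]=0$. With $\lambda>0$ and step size $\eta>0$, the learner maintains $V_0=\lambda I$, $\theta_0=0$, and for $t\ge1$: $V_t=V_{t-1}+\eta x_tx_t^\top$ and $\theta_t=\theta_{t-1}+\eta V_{t-1}^{-1}(y_t-\theta_{t-1}^\top x_t)x_t$. For a positive definite matrix $A$, $\|v\|_A=\sqrt{v^\top Av}$. *)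

theory Defs
  imports "HOL-Analysis.Analysis" "HOL-Probability.Probability"
begin

definition outer :: "real^'d \<Rightarrow> real^'d \<Rightarrow> real^'d^'d" where
  "outer x y = (\<chi> i j. x $ i * y $ j)"

definition mnorm :: "real^'d^'d \<Rightarrow> real^'d \<Rightarrow> real" where
  "mnorm A v = sqrt (v \<bullet> (A *v v))"

primrec Vmat :: "real \<Rightarrow> real \<Rightarrow> (nat \<Rightarrow> real^'d) \<Rightarrow> nat \<Rightarrow> real^'d^'d" where
  "Vmat lam eta xs 0 = lam *\<^sub>R mat 1"
| "Vmat lam eta xs (Suc t) = Vmat lam eta xs t + eta *\<^sub>R outer (xs (Suc t)) (xs (Suc t))"

primrec theta :: "real \<Rightarrow> real \<Rightarrow> (nat \<Rightarrow> real^'d) \<Rightarrow> (nat \<Rightarrow> real) \<Rightarrow> nat \<Rightarrow> real^'d" where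
  "theta lam eta xs ys 0 = 0"
| "theta lam eta xs ys (Suc t) = theta lam eta xs ys t
     + (eta * (ys (Suc t) - theta lam eta xs ys t \<bullet> xs (Suc t)))
        *\<^sub>R (matrix_inv (Vmat lam eta xs t) *v xs (Suc t))"

definition hist_alg :: "'a measure \<Rightarrow> (nat \<Rightarrow> 'a \<Rightarrow> real^'d) \<Rightarrow> (nat \<Rightarrow> 'a \<Rightarrow> real) \<Rightarrow> nat \<Rightarrow> 'a measure" where
  "hist_alg M x eps t = sigma (space M)
     ((\<Union>i\<in>{1..t}. {x i -` A \<inter> space M | A. A \<in> sets borel})
      \<union> (\<Union>i\<in>{1..<t}. {eps i -` B \<inter> space M | B. B \<in> sets borel}))"

end

theory Submission
  imports Defs
begin

text \<open>Write \<open>D = \<theta>\<^sub>t\<^sub>-\<^sub>1 - \<theta>\<^sub>*\<close>, \<open>a = D\<^sup>T x\<^sub>t\<close>, \<open>z = V\<^sub>t\<^sub>-\<^sub>1\<^sup>-\<^sup>1 x\<^sub>t\<close> and \<open>s = x\<^sub>t\<^sup>T z\<close>.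
  Since \<open>y\<^sub>t - \<theta>\<^sub>t\<^sub>-\<^sub>1\<^sup>T x\<^sub>t = \<epsilon>\<^sub>t - a\<close>, the new error is \<open>D + \<eta>(\<epsilon>\<^sub>t - a) z\<close>, and expanding its
  norm in the rank-one update \<open>V\<^sub>t = V\<^sub>t\<^sub>-\<^sub>1 + \<eta> x\<^sub>t x\<^sub>t\<^sup>T\<close> expresses \<open>X\<^sub>t - X\<^sub>t\<^sub>-\<^sub>1\<close> as a polynomial in
  \<open>a, \<epsilon>\<^sub>t, s\<close>. Because \<open>V\<^sub>t\<^sub>-\<^sub>1 \<succeq> \<lambda> I\<close> and \<open>\<parallel>x\<^sub>t\<parallel> \<le> L\<close>, the step size condition gives \<open>\<eta> s \<le> 1\<close>,
  which makes the difference between that polynomial and \<open>N\<^sub>t\<close> nonpositive. The bound holds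
  for every outcome, so no property of the noise is needed; telescoping gives the sum.\<close>

lemma outer_mult_vec: "outer x x *v w = (x \<bullet> w) *\<^sub>R (x::real^'d)"
  by (simp add: outer_def vec_eq_iff matrix_vector_mult_def inner_vec_def sum_distrib_left
      mult.commute mult.left_commute)

lemma mnorm_power2: "0 \<le> v \<bullet> (A *v v) \<Longrightarrow> (mnorm A v)\<^sup>2 = v \<bullet> (A *v v)"
  by (simp add: mnorm_def)

lemma matrix_inv_right_coercive:
  fixes A :: "real^'n^'n"
  assumes coercive: "\<And>w. c * (w \<bullet> w) \<le> w \<bullet> (A *v w)" and "c > 0"
  shows "A *v (matrix_inv A *v v) = v"
proof -
  have "w = 0" if "A *v w = 0" for w
  proof -
    have "c * (w \<bullet> w) \<le> 0" using coercive[of w] that by simp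
    then have "w \<bullet> w \<le> 0" using \<open>c > 0\<close> by (simp add: mult_le_0_iff)
    then show "w = 0" by (metis inner_gt_zero_iff not_le)
  qed
  then have "invertible A"
    using matrix_left_invertible_ker invertible_left_inverse by blast
  then have "A ** matrix_inv A = mat 1"
    unfolding invertible_def matrix_inv_def
    by (rule someI_ex[where P = "\<lambda>B. A ** B = mat 1 \<and> B ** A = mat 1", THEN conjunct1])
  then show ?thesis by (metis matrix_vector_mul_assoc matrix_vector_mul_lid)
qed

lemma inverse_quadratic_form_bound:
  fixes A :: "real^'n^'n"
  assumes coercive: "\<And>w. c * (w \<bullet> w) \<le> w \<bullet> (A *v w)" and "c > 0" and Az: "A *v z = x"
  shows "0 \<le> x \<bullet> z" and "c * (x \<bullet> z) \<le> (norm x)\<^sup>2"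
proof -
  have cz: "c * (norm z)\<^sup>2 \<le> x \<bullet> z"
    using coercive[of z] by (simp add: Az inner_commute power2_norm_eq_inner)
  then show "0 \<le> x \<bullet> z" using \<open>c > 0\<close> by (smt (verit) zero_le_mult_iff zero_le_power2)
  have xz: "x \<bullet> z \<le> norm x * norm z" by (rule norm_cauchy_schwarz)
  have "c * norm z \<le> norm x"
  proof (cases "z = 0")
    case False
    then have "(c * norm z) * norm z \<le> norm x * norm z"
      using cz xz by (smt (verit) mult.assoc power2_eq_square)
    then show ?thesis using False by (simp add: mult_right_le_imp_le)
  qed simp
  then have "c * (x \<bullet> z) \<le> norm x * norm x"
    using xz \<open>c > 0\<close> by (smt (verit) mult.left_commute mult_left_mono norm_ge_zero)
  then show "c * (x \<bullet> z) \<le> (norm x)\<^sup>2" by (simp add: power2_eq_square)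
qed

lemma step_size_inverse_quadratic_form_le_1:
  fixes A :: "real^'n^'n"
  assumes coercive: "\<And>w. c * (w \<bullet> w) \<le> w \<bullet> (A *v w)" and "c > 0" and "A *v z = x"
    and "norm x \<le> L" and "0 < eta" and "eta * L\<^sup>2 \<le> c"
  shows "eta * (x \<bullet> z) \<le> 1"
proof -
  have "c * (x \<bullet> z) \<le> (norm x)\<^sup>2"
    using inverse_quadratic_form_bound(2)[OF assms(1-3)] .
  also have "\<dots> \<le> L\<^sup>2"
    using \<open>norm x \<le> L\<close> by (simp add: power_mono)
  finally have "c * (eta * (x \<bullet> z)) \<le> c * 1"
    using \<open>0 < eta\<close> \<open>eta * L\<^sup>2 \<le> c\<close>
    by (smt (verit, best) mult.left_commute mult_left_mono)
  then show ?thesis using \<open>c > 0\<close> by simp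
qed

lemma rank_one_update_quadratic_form:
  fixes V V' :: "real^'n^'n"
  assumes symmetric: "\<And>u w. u \<bullet> (V *v w) = w \<bullet> (V *v u)"
    and update: "\<And>w. V' *v w = V *v w + (eta * (x \<bullet> w)) *\<^sub>R x"
    and Vz: "V *v z = x"
  shows "(D + c *\<^sub>R z) \<bullet> (V' *v (D + c *\<^sub>R z))
    = D \<bullet> (V *v D) + 2 * c * (D \<bullet> x) + c\<^sup>2 * (x \<bullet> z) + eta * (D \<bullet> x + c * (x \<bullet> z))\<^sup>2"
proof -
  have "z \<bullet> (V *v D) = D \<bullet> x" using symmetric[of z D] by (simp add: Vz inner_commute)
  then show ?thesis
    by (simp add: update Vz matrix_vector_right_distrib matrix_scaleR_vector_ac
        scaleR_matrix_vector_assoc[symmetric] inner_add_left inner_add_right inner_commute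
        power2_eq_square algebra_simps)
qed

text \<open>With \<open>a = D\<^sup>T x\<^sub>t\<close>, \<open>e = \<epsilon>\<^sub>t\<close> and \<open>q = x\<^sub>t\<^sup>T V\<^sub>t\<^sub>-\<^sub>1\<^sup>-\<^sup>1 x\<^sub>t\<close>, the left side is \<open>X\<^sub>t\<close> and the
  right side \<open>X\<^sub>t\<^sub>-\<^sub>1 + N\<^sub>t\<close>; their difference factors as
  \<open>a\<^sup>2\<eta>((\<eta>q)\<^sup>2 - \<eta>q - 1) + e\<^sup>2\<eta>\<^sup>2q(\<eta>q - 1)\<close>.\<close>
lemma potential_increment_le:
  fixes X a q e eta :: real
  assumes "0 \<le> q" "0 < eta" "eta * q \<le> 1"
  shows "X + 2*(eta*(e - a))*a + (eta*(e - a))^2*q + eta*(a + eta*(e - a)*q)^2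
    \<le> X + (2*eta*e*a - 2*eta^3*e*a*q^2 + 2*e^2*eta^2*q)"
proof -
  have "(eta*q)^2 \<le> eta*q" using assms by (simp add: power2_eq_square mult_left_le)
  then have "a^2*eta*(-1 - eta*q + (eta*q)^2) \<le> 0"
    using assms(2) by (simp add: mult_nonneg_nonpos)
  moreover have "e^2*eta^2*q*(eta*q - 1) \<le> 0"
    using assms by (simp add: mult_nonneg_nonpos)
  moreover have "X + 2*(eta*(e - a))*a + (eta*(e - a))^2*q + eta*(a + eta*(e - a)*q)^2
      - (X + (2*eta*e*a - 2*eta^3*e*a*q^2 + 2*e^2*eta^2*q))
    = a^2*eta*(-1 - eta*q + (eta*q)^2) + e^2*eta^2*q*(eta*q - 1)"
    by (simp add: power2_eq_square power3_eq_cube algebra_simps)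
  ultimately show ?thesis by linarith
qed

lemma Vmat_Suc_mult_vec:
  "Vmat lam eta xs (Suc t) *v w = Vmat lam eta xs t *v w + (eta * (xs (Suc t) \<bullet> w)) *\<^sub>R xs (Suc t)"
  by (simp add: matrix_vector_mult_add_rdistrib scaleR_matrix_vector_assoc[symmetric] outer_mult_vec)

lemma inner_Vmat_mult_vec:
  "u \<bullet> (Vmat lam eta xs t *v w) = lam * (u \<bullet> w) + (\<Sum>i=1..t. eta * (xs i \<bullet> u) * (xs i \<bullet> w))"
proof (induction t)
  case 0
  then show ?case by (simp add: scaleR_matrix_vector_assoc[symmetric])
next
  case (Suc t)
  then show ?case unfolding Vmat_Suc_mult_vec
    by (simp add: inner_add_right sum.cl_ivl_Suc inner_commute algebra_simps)
qed

lemma inner_Vmat_commute: "u \<bullet> (Vmat lam eta xs t *v w) = w \<bullet> (Vmat lam eta xs t *v u)"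
  by (simp add: inner_Vmat_mult_vec inner_commute mult.commute mult.left_commute)

lemma Vmat_coercive:
  assumes "0 \<le> eta"
  shows "lam * (w \<bullet> w) \<le> w \<bullet> (Vmat lam eta xs t *v w)"
proof -
  have "0 \<le> (\<Sum>i=1..t. eta * (xs i \<bullet> w) * (xs i \<bullet> w))"
    by (intro sum_nonneg) (simp add: assms mult.assoc)
  then show ?thesis by (simp add: inner_Vmat_mult_vec)
qed

lemma Vmat_nonneg:
  assumes "0 \<le> lam" "0 \<le> eta"
  shows "0 \<le> w \<bullet> (Vmat lam eta xs t *v w)"
  using Vmat_coercive[OF assms(2), of lam w xs t] assms(1)
  by (smt (verit) inner_ge_zero mult_nonneg_nonneg)

lemma theta_Suc_minus:
  "theta lam eta xs (\<lambda>i. ts \<bullet> xs i + e i) (Suc t) - ts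
    = (theta lam eta xs (\<lambda>i. ts \<bullet> xs i + e i) t - ts)
      + (eta * (e (Suc t) - (theta lam eta xs (\<lambda>i. ts \<bullet> xs i + e i) t - ts) \<bullet> xs (Suc t)))
        *\<^sub>R (matrix_inv (Vmat lam eta xs t) *v xs (Suc t))"
  by (simp add: inner_diff_left inner_commute algebra_simps)

lemma potential_step:
  fixes xs :: "nat \<Rightarrow> real^'d" and ts :: "real^'d" and e :: "nat \<Rightarrow> real"
  defines "ys \<equiv> \<lambda>i. ts \<bullet> xs i + e i"
  assumes lam: "0 < lam" and eta: "0 < eta" and step_size: "eta * L\<^sup>2 \<le> lam"
    and bounded: "norm (xs (Suc t)) \<le> L"
  shows "(mnorm (Vmat lam eta xs (Suc t)) (theta lam eta xs ys (Suc t) - ts))\<^sup>2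
     \<le> (mnorm (Vmat lam eta xs t) (theta lam eta xs ys t - ts))\<^sup>2
       + (2 * eta * e (Suc t) * ((theta lam eta xs ys t - ts) \<bullet> xs (Suc t))
          - 2 * eta ^ 3 * e (Suc t) * ((theta lam eta xs ys t - ts) \<bullet> xs (Suc t))
              * (mnorm (matrix_inv (Vmat lam eta xs t)) (xs (Suc t))) ^ 4
          + 2 * (e (Suc t))\<^sup>2 * eta\<^sup>2 * (mnorm (matrix_inv (Vmat lam eta xs t)) (xs (Suc t)))\<^sup>2)"
proof -
  define V where "V = Vmat lam eta xs t"
  define x where "x = xs (Suc t)"
  define z where "z = matrix_inv V *v x"
  define D where "D = theta lam eta xs ys t - ts"
  define a where "a = D \<bullet> x"
  define s where "s = x \<bullet> z"
  have coercive: "\<And>w. lam * (w \<bullet> w) \<le> w \<bullet> (V *v w)"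
    unfolding V_def using eta by (intro Vmat_coercive) simp
  have Vz: "V *v z = x"
    unfolding z_def using coercive lam by (rule matrix_inv_right_coercive)
  have s_nonneg: "0 \<le> s"
    unfolding s_def using inverse_quadratic_form_bound(1)[OF coercive lam Vz] .
  have eta_s: "eta * s \<le> 1"
    unfolding s_def using step_size_inverse_quadratic_form_le_1[OF coercive lam Vz _ eta step_size]
      bounded by (simp add: x_def)
  have error: "theta lam eta xs ys (Suc t) - ts = D + (eta * (e (Suc t) - a)) *\<^sub>R z"
    unfolding ys_def theta_Suc_minus D_def a_def z_def x_def V_def ..
  define c where "c = eta * (e (Suc t) - a)"
  have "(mnorm (Vmat lam eta xs (Suc t)) (D + c *\<^sub>R z))\<^sup>2
      = (D + c *\<^sub>R z) \<bullet> (Vmat lam eta xs (Suc t) *v (D + c *\<^sub>R z))"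
    using eta lam by (intro mnorm_power2 Vmat_nonneg) simp_all
  also have "\<dots> = D \<bullet> (V *v D) + 2 * c * a + c\<^sup>2 * s + eta * (a + c * s)\<^sup>2"
    unfolding a_def s_def
  proof (rule rank_one_update_quadratic_form[OF _ _ Vz])
    show "\<And>u w. u \<bullet> (V *v w) = w \<bullet> (V *v u)"
      unfolding V_def by (rule inner_Vmat_commute)
    show "\<And>w. Vmat lam eta xs (Suc t) *v w = V *v w + (eta * (x \<bullet> w)) *\<^sub>R x"
      unfolding V_def x_def by (rule Vmat_Suc_mult_vec)
  qed
  finally have
    "(mnorm (Vmat lam eta xs (Suc t)) (D + c *\<^sub>R z))\<^sup>2
      = D \<bullet> (V *v D) + 2 * c * a + c\<^sup>2 * s + eta * (a + c * s)\<^sup>2" .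
  moreover have "(mnorm V D)\<^sup>2 = D \<bullet> (V *v D)"
    unfolding V_def using eta lam by (simp add: mnorm_power2 Vmat_nonneg)
  moreover have inv_norm: "(mnorm (matrix_inv V) x)\<^sup>2 = s"
    using s_nonneg by (simp add: mnorm_power2 s_def z_def inner_commute)
  moreover have "(mnorm (matrix_inv V) x) ^ 4 = s\<^sup>2"
    by (simp flip: inv_norm power_mult)
  moreover have "D \<bullet> (V *v D) + 2 * c * a + c\<^sup>2 * s + eta * (a + c * s)\<^sup>2
      \<le> D \<bullet> (V *v D) + (2 * eta * e (Suc t) * a - 2 * eta ^ 3 * e (Suc t) * a * s\<^sup>2
          + 2 * (e (Suc t))\<^sup>2 * eta\<^sup>2 * s)"
    unfolding c_def by (rule potential_increment_le[OF s_nonneg eta eta_s])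
  ultimately show ?thesis
    unfolding error[folded c_def] V_def[symmetric] x_def[symmetric] D_def[symmetric]
      a_def[symmetric]
    by simp
qed

lemma telescoping_upper_bound:
  fixes X N :: "nat \<Rightarrow> real"
  assumes "\<And>k. X (Suc k) \<le> X k + N (Suc k)"
  shows "X t \<le> X 0 + (\<Sum>i=1..t. N i)"
proof (induction t)
  case (Suc t)
  then show ?case using assms[of t] by (simp add: sum.cl_ivl_Suc)
qed simp

lemma AE_step_and_telescoped_bounds:
  fixes X N :: "nat \<Rightarrow> 'a \<Rightarrow> real"
  assumes "\<And>\<omega> k. \<omega> \<in> space M \<Longrightarrow> X (Suc k) \<omega> \<le> X k \<omega> + N (Suc k) \<omega>"
  shows "(\<forall>t\<ge>1. AE \<omega> in M. X t \<omega> \<le> X (t - 1) \<omega> + N t \<omega>)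
      \<and> (\<forall>t. AE \<omega> in M. X t \<omega> \<le> X 0 \<omega> + (\<Sum>i=1..t. N i \<omega>))"
proof (intro conjI allI impI AE_I2)
  fix t :: nat and \<omega> assume "1 \<le> t" "\<omega> \<in> space M"
  then show "X t \<omega> \<le> X (t - 1) \<omega> + N t \<omega>"
    using assms[of \<omega> "t - 1"] by simp
next
  fix t :: nat and \<omega> assume "\<omega> \<in> space M"
  then show "X t \<omega> \<le> X 0 \<omega> + (\<Sum>i=1..t. N i \<omega>)"
    using assms by (intro telescoping_upper_bound[where X = "\<lambda>t. X t \<omega>"])
qed

theorem mainTheorem8:
  fixes M :: "'a measure"
    and theta_star :: "real^'d"
    and L_star L lam eta :: real
    and D :: "nat \<Rightarrow> 'a \<Rightarrow> (real^'d) set"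
    and x :: "nat \<Rightarrow> 'a \<Rightarrow> real^'d"
    and eps :: "nat \<Rightarrow> 'a \<Rightarrow> real"
  assumes "prob_space M"
    and "norm theta_star \<le> L_star"
    and "\<And>t \<omega>. t \<ge> 1 \<Longrightarrow> \<omega> \<in> space M \<Longrightarrow> D t \<omega> \<subseteq> {v. norm v \<le> L}"
    and "\<And>t \<omega>. t \<ge> 1 \<Longrightarrow> \<omega> \<in> space M \<Longrightarrow> x t \<omega> \<in> D t \<omega>"
    and "\<And>t. t \<ge> 1 \<Longrightarrow> x t \<in> borel_measurable M"
    and "\<And>t. t \<ge> 1 \<Longrightarrow> eps t \<in> borel_measurable M"
    and "\<And>t. t \<ge> 1 \<Longrightarrow> AE \<omega> in M. \<bar>eps t \<omega>\<bar> \<le> 1"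
    and "\<And>t. t \<ge> 1 \<Longrightarrow> AE \<omega> in M. real_cond_exp M (hist_alg M x eps t) (eps t) \<omega> = 0"
    and "lam > 0"
    and "eta > 0"
    and "eta * L\<^sup>2 \<le> lam"
  shows
    "let y = (\<lambda>\<omega> t. theta_star \<bullet> x t \<omega> + eps t \<omega>);
         xs = (\<lambda>\<omega> t. x t \<omega>);
         V = (\<lambda>\<omega> t. Vmat lam eta (xs \<omega>) t);
         th = (\<lambda>\<omega> t. theta lam eta (xs \<omega>) (y \<omega>) t);
         X = (\<lambda>t \<omega>. (mnorm (V \<omega> t) (th \<omega> t - theta_star))\<^sup>2);
         N = (\<lambda>t \<omega>. 2 * eta * eps t \<omega> * ((th \<omega> (t - 1) - theta_star) \<bullet> x t \<omega>)
                 - 2 * eta ^ 3 * eps t \<omega> * ((th \<omega> (t - 1) - theta_star) \<bullet> x t \<omega>)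
                     * (mnorm (matrix_inv (V \<omega> (t - 1))) (x t \<omega>)) ^ 4
                 + 2 * (eps t \<omega>)\<^sup>2 * eta\<^sup>2 * (mnorm (matrix_inv (V \<omega> (t - 1))) (x t \<omega>))\<^sup>2)
     in (\<forall>t\<ge>1. AE \<omega> in M. X t \<omega> \<le> X (t - 1) \<omega> + N t \<omega>)
      \<and> (\<forall>t. AE \<omega> in M. X t \<omega> \<le> X 0 \<omega> + (\<Sum>i=1..t. N i \<omega>))"
proof -
  have bounded: "norm (x (Suc k) \<omega>) \<le> L" if "\<omega> \<in> space M" for k \<omega>
    using assms(3,4)[of "Suc k" \<omega>] that by auto
  show ?thesis
    unfolding Let_def
  proof (rule AE_step_and_telescoped_bounds, goal_cases)
    case (1 \<omega> k)
    show ?case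
      using potential_step[OF assms(9,10,11), where xs = "\<lambda>t. x t \<omega>" and t = k and
          ts = theta_star and e = "\<lambda>t. eps t \<omega>", OF bounded[OF 1]]
      by (simp only: diff_Suc_1)
  qed
qed

end
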